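(* Let $G=(V,E)$ be a bridgeless connected graph with no $2$-edge-cut, and assume all roots of $F(G,\lambda)$ are real. Let $\gamma$ be the number of $3$-edge-cuts of $G$ and $r=|E|-|V|+1$. Then $$\gamma\ge \frac{(|E|-r)(|E|-1)}{2(r-1)},$$ and the inequality is strict if $r-1$ does not divide $|E|-1$.
   Context: Graphs are finite, undirected, possibly with loops and parallel edges. The flow polynomial $F(G,\lambda)$ is determined by: $F(G,\lambda)=1$ if $E(G)=\emptyset$; $F(G,\lambda)=0$ if $G$ has a bridge; multiplicative over disjoint unions; $F(G,\lambda)=(\lambda-1)F(G-e,\lambda)$ if $e$ is a loop; otherwise $F(G,\lambda)=F(G/e,\lambda)-F(G-e,\lambda)$ ($G/e$ = contraction of $e$). A $k$-edge-cut is a set of $k$ edges whose deletion increases the number of components. *)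

theory Defs
  imports Complex_Main "HOL-Computational_Algebra.Polynomial"
begin

text \<open>A finite multigraph (loops and parallel edges allowed) is given by a vertex set V,
an edge set E and an incidence map ends assigning to each edge its set of endpoints
(one endpoint for a loop, two for a non-loop edge).\<close>

definition graph :: "'v set \<Rightarrow> 'e set \<Rightarrow> ('e \<Rightarrow> 'v set) \<Rightarrow> bool" where
  "graph V E ends \<longleftrightarrow> finite V \<and> finite E \<and>
     (\<forall>e\<in>E. ends e \<subseteq> V \<and> card (ends e) \<in> {1, 2})"

definition is_loop :: "('e \<Rightarrow> 'v set) \<Rightarrow> 'e \<Rightarrow> bool" where
  "is_loop ends e \<longleftrightarrow> card (ends e) = 1"

definition adj :: "'e set \<Rightarrow> ('e \<Rightarrow> 'v set) \<Rightarrow> ('v \<times> 'v) set" where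
  "adj E ends = {(x, y). \<exists>e\<in>E. x \<in> ends e \<and> y \<in> ends e}"

definition comp_rel :: "'v set \<Rightarrow> 'e set \<Rightarrow> ('e \<Rightarrow> 'v set) \<Rightarrow> ('v \<times> 'v) set" where
  "comp_rel V E ends = {(u, v). u \<in> V \<and> v \<in> V \<and> (u, v) \<in> (adj E ends)\<^sup>*}"

definition ncomp :: "'v set \<Rightarrow> 'e set \<Rightarrow> ('e \<Rightarrow> 'v set) \<Rightarrow> nat" where
  "ncomp V E ends = card (V // comp_rel V E ends)"

definition connected_graph :: "'v set \<Rightarrow> 'e set \<Rightarrow> ('e \<Rightarrow> 'v set) \<Rightarrow> bool" where
  "connected_graph V E ends \<longleftrightarrow> V \<noteq> {} \<and> (\<forall>u\<in>V. \<forall>v\<in>V. (u, v) \<in> (adj E ends)\<^sup>*)"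

definition is_edge_cut :: "'v set \<Rightarrow> 'e set \<Rightarrow> ('e \<Rightarrow> 'v set) \<Rightarrow> 'e set \<Rightarrow> bool" where
  "is_edge_cut V E ends S \<longleftrightarrow> S \<subseteq> E \<and> ncomp V (E - S) ends > ncomp V E ends"

definition k_edge_cuts :: "nat \<Rightarrow> 'v set \<Rightarrow> 'e set \<Rightarrow> ('e \<Rightarrow> 'v set) \<Rightarrow> 'e set set" where
  "k_edge_cuts k V E ends = {S. card S = k \<and> is_edge_cut V E ends S}"

definition is_bridge :: "'v set \<Rightarrow> 'e set \<Rightarrow> ('e \<Rightarrow> 'v set) \<Rightarrow> 'e \<Rightarrow> bool" where
  "is_bridge V E ends e \<longleftrightarrow> e \<in> E \<and> is_edge_cut V E ends {e}"

definition contract_ends :: "('e \<Rightarrow> 'v set) \<Rightarrow> 'v \<Rightarrow> 'v \<Rightarrow> ('e \<Rightarrow> 'v set)" where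
  "contract_ends ends u v = (\<lambda>f. (\<lambda>x. if x = v then u else x) ` ends f)"

text \<open>The flow polynomial, given by its defining recursion: flow_poly V E ends p means that
p is the flow polynomial F(G, \<lambda>) of G = (V, E, ends).  (The rules determine p uniquely.)\<close>
inductive flow_poly :: "'v set \<Rightarrow> 'e set \<Rightarrow> ('e \<Rightarrow> 'v set) \<Rightarrow> real poly \<Rightarrow> bool" where
  empty: "graph V {} ends \<Longrightarrow> flow_poly V {} ends 1"
| bridge: "graph V E ends \<Longrightarrow> is_bridge V E ends e \<Longrightarrow> flow_poly V E ends 0"
| disj_union: "graph V E ends \<Longrightarrow> graph V1 E1 ends \<Longrightarrow> graph V2 E2 ends \<Longrightarrow>
     V1 \<inter> V2 = {} \<Longrightarrow> E1 \<inter> E2 = {} \<Longrightarrow> V = V1 \<union> V2 \<Longrightarrow> E = E1 \<union> E2 \<Longrightarrow>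
     flow_poly V1 E1 ends p1 \<Longrightarrow> flow_poly V2 E2 ends p2 \<Longrightarrow> flow_poly V E ends (p1 * p2)"
| loop: "graph V E ends \<Longrightarrow> e \<in> E \<Longrightarrow> is_loop ends e \<Longrightarrow>
     flow_poly V (E - {e}) ends p \<Longrightarrow> flow_poly V E ends ([:-1, 1:] * p)"
| del_contr: "graph V E ends \<Longrightarrow> e \<in> E \<Longrightarrow> ends e = {u, v} \<Longrightarrow> u \<noteq> v \<Longrightarrow>
     \<not> is_bridge V E ends e \<Longrightarrow>
     flow_poly (V - {v}) (E - {e}) (contract_ends ends u v) p1 \<Longrightarrow>
     flow_poly V (E - {e}) ends p2 \<Longrightarrow> flow_poly V E ends (p1 - p2)"

end

theory Submission
  imports Defs "HOL-Computational_Algebra.Fundamental_Theorem_Algebra"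
begin

lemma map_poly_of_real_mult:
  "map_poly of_real (p * q) = map_poly of_real p * (map_poly of_real q :: 'a::{comm_ring_1, real_algebra_1} poly)"
  by (simp add: poly_eq_iff coeff_map_poly coeff_mult)

lemma map_poly_of_real_prod_linear_factors:
  "map_poly of_real (\<Prod>x\<leftarrow>xs. [:-x, 1:]) = (\<Prod>x\<leftarrow>xs. [:-of_real x, 1:] :: 'a::{comm_ring_1, real_algebra_1} poly)"
proof (induction xs)
  case (Cons x xs)
  have "map_poly of_real [:-x, 1:] = ([:-of_real x, 1:] :: 'a poly)"
    by (simp add: map_poly_pCons)
  then show ?case
    by (simp only: list.map prod_list.Cons map_poly_of_real_mult Cons.IH)
qed simp

lemma real_rooted_poly_splits:
  fixes p :: "real poly"
  assumes monic: "lead_coeff p = 1"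
    and real_roots: "\<forall>z::complex. poly (map_poly of_real p) z = 0 \<longrightarrow> z \<in> \<real>"
  obtains xs where "p = (\<Prod>x\<leftarrow>xs. [:-x, 1:])"
proof -
  define P :: "complex poly" where "P = map_poly of_real p"
  have "lead_coeff P = 1"
    using monic by (simp add: P_def degree_map_poly coeff_map_poly)
  then have "P \<noteq> 0" by auto
  obtain zs where zs: "mset zs = proots P" using ex_mset by blast
  have "P = smult (lead_coeff P) (\<Prod>z\<in>#proots P. [:-z, 1:])"
    by (rule complex_poly_decompose_multiset [symmetric])
  also have "\<dots> = (\<Prod>z\<leftarrow>zs. [:-z, 1:])"
    using \<open>lead_coeff P = 1\<close> by (simp flip: zs prod_mset_prod_list)
  finally have P_zs: "P = (\<Prod>z\<leftarrow>zs. [:-z, 1:])" .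
  have "z \<in> \<real>" if "z \<in> set zs" for z
  proof -
    have "z \<in># proots P" using that zs by (metis set_mset_mset)
    then show ?thesis using \<open>P \<noteq> 0\<close> real_roots by (simp add: P_def)
  qed
  then have "zs = map (of_real \<circ> Re) zs"
    by (induction zs) auto
  then have "P = map_poly of_real (\<Prod>x\<leftarrow>map Re zs. [:-x, 1:])"
    unfolding map_poly_of_real_prod_linear_factors P_zs
    by (metis (no_types, lifting) list.map_comp map_eq_conv o_apply)
  then have "p = (\<Prod>x\<leftarrow>map Re zs. [:-x, 1:])"
    by (simp add: P_def poly_eq_iff coeff_map_poly)
  then show thesis by (rule that)
qed

lemma prod_linear_factors_monic:
  "degree (\<Prod>x\<leftarrow>xs. [:-x, 1:]) = length xs \<and> coeff (\<Prod>x\<leftarrow>xs. [:-x, 1:]) (length xs) = (1::'a::comm_ring_1)"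
proof (induction xs)
  case (Cons a xs)
  let ?q = "\<Prod>x\<leftarrow>xs. [:-x, 1:]"
  have lead: "coeff ([:-a, 1:] * ?q) (Suc (length xs)) = 1"
    using Cons.IH by (simp add: coeff_eq_0)
  have "degree ([:-a, 1:] * ?q) \<le> Suc (length xs)"
    using degree_mult_le[of "[:-a, 1:]" ?q] Cons.IH by simp
  moreover have "Suc (length xs) \<le> degree ([:-a, 1:] * ?q)"
    using lead by (intro le_degree) simp
  ultimately have "degree ([:-a, 1:] * ?q) = Suc (length xs)"
    by (rule order.antisym)
  with lead show ?case
    by (simp only: list.map prod_list.Cons length_Cons)
qed simp

lemma prod_linear_factors_coeffs:
  fixes xs :: "'a::comm_ring_1 list"
  defines "q \<equiv> \<Prod>x\<leftarrow>xs. [:-x, 1:]"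
  shows "length xs \<ge> 1 \<Longrightarrow> coeff q (length xs - 1) = - sum_list xs"
    and "length xs \<ge> 2 \<Longrightarrow>
           2 * coeff q (length xs - 2) = (sum_list xs)\<^sup>2 - sum_list (map (\<lambda>x. x\<^sup>2) xs)"
proof -
  have "(length xs \<ge> 1 \<longrightarrow> coeff q (length xs - 1) = - sum_list xs)
     \<and> (length xs \<ge> 2 \<longrightarrow>
          2 * coeff q (length xs - 2) = (sum_list xs)\<^sup>2 - sum_list (map (\<lambda>x. x\<^sup>2) xs))"
    unfolding q_def
  proof (induction xs)
    case (Cons a xs)
    let ?q = "\<Prod>x\<leftarrow>xs. [:-x, 1:]" and ?n = "length xs"
    have coeff_Suc: "coeff ([:-a, 1:] * ?q) (Suc k) = coeff ?q k - a * coeff ?q (Suc k)" for k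
      by simp
    have lead: "coeff ?q ?n = 1" using prod_linear_factors_monic by blast
    have "coeff ([:-a, 1:] * ?q) ?n = - (a + sum_list xs)"
    proof (cases ?n)
      case (Suc k)
      then show ?thesis using Cons.IH lead by (simp only: coeff_Suc) simp
    qed simp
    moreover have "2 * coeff ([:-a, 1:] * ?q) (?n - 1) =
        (a + sum_list xs)\<^sup>2 - (a\<^sup>2 + sum_list (map (\<lambda>x. x\<^sup>2) xs))" if "?n \<ge> 1"
    proof (cases "?n = 1")
      case True
      then obtain b where "xs = [b]" by (cases xs) auto
      then show ?thesis by (simp add: power2_eq_square algebra_simps)
    next
      case False
      with that obtain k where k: "?n - 1 = Suc k" "?n - 2 = k" by (cases "?n - 1") auto
      with Cons.IH that False show ?thesis
        unfolding k(1) coeff_Suc by (simp add: power2_eq_square algebra_simps)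
    qed
    ultimately show ?case by simp
  qed simp
  then show "length xs \<ge> 1 \<Longrightarrow> coeff q (length xs - 1) = - sum_list xs"
    and "length xs \<ge> 2 \<Longrightarrow>
           2 * coeff q (length xs - 2) = (sum_list xs)\<^sup>2 - sum_list (map (\<lambda>x. x\<^sup>2) xs)"
    by auto
qed

lemma sum_list_squared_le:
  fixes xs :: "real list"
  shows "(sum_list xs)\<^sup>2 \<le> length xs * sum_list (map (\<lambda>x. x\<^sup>2) xs)"
    and "(sum_list xs)\<^sup>2 = length xs * sum_list (map (\<lambda>x. x\<^sup>2) xs) \<Longrightarrow>
           \<forall>x\<in>set xs. x = sum_list xs / length xs"
proof -
  define n where "n = real (length xs)"
  define c where "c = sum_list xs / n"
  have deviation: "n * sum_list (map (\<lambda>x. (x - c)\<^sup>2) xs) = n * sum_list (map (\<lambda>x. x\<^sup>2) xs) - (sum_list xs)\<^sup>2"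
  proof -
    have "sum_list (map (\<lambda>x. (x - c)\<^sup>2) xs) = sum_list (map (\<lambda>x. x\<^sup>2) xs) - 2 * c * sum_list xs + n * c\<^sup>2"
      unfolding n_def by (induction xs) (auto simp: power2_eq_square algebra_simps)
    then show ?thesis
      by (cases "n = 0") (auto simp: c_def n_def power2_eq_square field_simps)
  qed
  have "sum_list (map (\<lambda>x. (x - c)\<^sup>2) xs) \<ge> 0"
    by (rule sum_list_nonneg) auto
  with deviation show "(sum_list xs)\<^sup>2 \<le> length xs * sum_list (map (\<lambda>x. x\<^sup>2) xs)"
    unfolding n_def by (smt (verit) mult_nonneg_nonneg of_nat_0_le_iff)
  assume "(sum_list xs)\<^sup>2 = length xs * sum_list (map (\<lambda>x. x\<^sup>2) xs)"
  then have "n = 0 \<or> sum_list (map (\<lambda>x. (x - c)\<^sup>2) xs) = 0"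
    using deviation by (simp add: n_def)
  then have "\<forall>y\<in>set (map (\<lambda>x. (x - c)\<^sup>2) xs). y = 0"
    by (auto simp: n_def) (subst (asm) sum_list_nonneg_eq_0_iff; auto)
  then show "\<forall>x\<in>set xs. x = sum_list xs / length xs"
    by (auto simp: c_def n_def)
qed

lemma sum_squares_bound_with_root_one:
  fixes xs :: "real list"
  assumes one: "1 \<in> set xs" and len: "length xs \<ge> 2"
  defines "s \<equiv> sum_list xs" and "t \<equiv> sum_list (map (\<lambda>x. x\<^sup>2) xs)"
    and "n \<equiv> length xs - 1"
  shows "(s - 1)\<^sup>2 \<le> n * (t - 1)"
    and "(s - 1)\<^sup>2 = n * (t - 1) \<Longrightarrow> (\<Prod>x\<leftarrow>xs. - x) = - ((- (s - 1) / n) ^ n)"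
proof -
  define ys where "ys = remove1 1 xs"
  have len_ys: "length ys = n"
    using one by (simp add: ys_def n_def length_remove1)
  have sum_ys: "sum_list ys = s - 1"
    using sum_list_map_remove1[OF one, of "\<lambda>x. x"] by (simp add: ys_def s_def)
  have sq_ys: "sum_list (map (\<lambda>x. x\<^sup>2) ys) = t - 1"
    using sum_list_map_remove1[OF one, of "\<lambda>x. x\<^sup>2"] by (simp add: ys_def t_def)
  show "(s - 1)\<^sup>2 \<le> n * (t - 1)"
    using sum_list_squared_le(1)[of ys] len_ys sum_ys sq_ys by simp
  assume "(s - 1)\<^sup>2 = n * (t - 1)"
  then have "\<forall>y\<in>set ys. y = (s - 1) / n"
    using sum_list_squared_le(2)[of ys] len_ys sum_ys sq_ys by simp
  then have "ys = replicate n ((s - 1) / n)"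
    using len_ys by (intro replicate_eqI) auto
  then have "(\<Prod>y\<leftarrow>ys. - y) = (- (s - 1) / n) ^ n"
    by (simp add: prod_list_replicate minus_divide_left)
  moreover have "(\<Prod>x\<leftarrow>xs. - x) = - (\<Prod>y\<leftarrow>ys. - y)"
    using one unfolding ys_def by (induction xs) auto
  ultimately show "(\<Prod>x\<leftarrow>xs. - x) = - ((- (s - 1) / n) ^ n)" by simp
qed

lemma real_rooted_poly_top_coeffs_bound:
  fixes p :: "real poly"
  assumes monic: "lead_coeff p = 1" and deg: "degree p \<ge> 2" and root_one: "poly p 1 = 0"
    and real_roots: "\<forall>z::complex. poly (map_poly of_real p) z = 0 \<longrightarrow> z \<in> \<real>"
  defines "r \<equiv> degree p"
  defines "s \<equiv> - coeff p (r - 1)" and "t \<equiv> coeff p (r - 2)"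
  shows "(s - 1)\<^sup>2 \<le> (real r - 1) * (s\<^sup>2 - 2 * t - 1)"
    and "(s - 1)\<^sup>2 = (real r - 1) * (s\<^sup>2 - 2 * t - 1) \<Longrightarrow>
           poly p 0 = - ((- (s - 1) / (real r - 1)) ^ (r - 1))"
proof -
  obtain xs where p: "p = (\<Prod>x\<leftarrow>xs. [:-x, 1:])"
    using real_rooted_poly_splits[OF monic real_roots] by blast
  note vieta = prod_linear_factors_coeffs[of xs, folded p]
  have len: "length xs = r"
    using prod_linear_factors_monic[of xs] unfolding r_def p by simp
  have "r \<ge> 2" using deg unfolding r_def .
  have sum: "sum_list xs = s"
    using vieta(1) len \<open>r \<ge> 2\<close> by (simp add: s_def)
  have sq: "sum_list (map (\<lambda>x. x\<^sup>2) xs) = s\<^sup>2 - 2 * t"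
    using vieta(2) len \<open>r \<ge> 2\<close> sum by (simp add: t_def)
  have poly_p: "poly p y = (\<Prod>x\<leftarrow>xs. y - x)" for y
    unfolding p by (induction xs) (auto simp: algebra_simps)
  have "1 \<in> set xs"
    using root_one by (auto simp: poly_p prod_list_zero_iff)
  note bound = sum_squares_bound_with_root_one[OF this, unfolded len sum sq]
  have r1: "real (r - 1) = real r - 1" using \<open>r \<ge> 2\<close> by simp
  show "(s - 1)\<^sup>2 \<le> (real r - 1) * (s\<^sup>2 - 2 * t - 1)"
    using bound(1) \<open>r \<ge> 2\<close> r1 by simp
  assume "(s - 1)\<^sup>2 = (real r - 1) * (s\<^sup>2 - 2 * t - 1)"
  then have "(\<Prod>x\<leftarrow>xs. - x) = - ((- (s - 1) / (real r - 1)) ^ (r - 1))"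
    using bound(2) \<open>r \<ge> 2\<close> r1 by simp
  moreover have "poly p 0 = (\<Prod>x\<leftarrow>xs. - x)"
    by (simp add: poly_p)
  ultimately show "poly p 0 = - ((- (s - 1) / (real r - 1)) ^ (r - 1))" by simp
qed

lemma dvd_if_power_of_quotient_in_Ints:
  fixes a b :: int
  assumes "b > 0" and "k \<ge> 1" and "(of_int a / of_int b :: real) ^ k \<in> \<int>"
  shows "b dvd a"
proof -
  obtain w where "(of_int a / of_int b :: real) ^ k = of_int w"
    using assms(3) by (auto elim: Ints_cases)
  then have "(of_int (a ^ k) :: real) = of_int (w * b ^ k)"
    using assms(1) by (simp add: power_divide field_simps)
  then have "b ^ k dvd a ^ k"
    by (simp only: of_int_eq_iff) simp
  then show ?thesis using assms(2) by simp
qed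

lemma real_rooted_poly_cut_bound:
  fixes p :: "real poly" and m g :: nat
  assumes monic: "lead_coeff p = 1" and deg: "degree p \<ge> 2" and root_one: "poly p 1 = 0"
    and real_roots: "\<forall>z::complex. poly (map_poly of_real p) z = 0 \<longrightarrow> z \<in> \<real>"
    and coeff1: "coeff p (degree p - 1) = - real m"
    and coeff2: "coeff p (degree p - 2) = real (m choose 2) - real g"
    and const: "poly p 0 \<in> \<int>"
  defines "r \<equiv> degree p"
  shows "(real m - 1) * (real m - real r) \<le> 2 * real g * (real r - 1)"
    and "(real m - 1) * (real m - real r) = 2 * real g * (real r - 1) \<Longrightarrow> (int r - 1) dvd (int m - 1)"
proof -
  note bound = real_rooted_poly_top_coeffs_bound[OF monic deg root_one real_roots,
      folded r_def, unfolded coeff1[folded r_def] coeff2[folded r_def] minus_minus]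
  have "2 * real (m choose 2) = real m * (real m - 1)"
    by (induction m) (simp_all add: numeral_2_eq_2 algebra_simps)
  then have rewrite: "(real m - 1)\<^sup>2 - (real r - 1) * ((real m)\<^sup>2 - 2 * (real (m choose 2) - real g) - 1)
      = (real m - 1) * (real m - real r) - 2 * real g * (real r - 1)"
    by (simp add: power2_eq_square right_diff_distrib) (simp add: algebra_simps)
  show "(real m - 1) * (real m - real r) \<le> 2 * real g * (real r - 1)"
    using bound(1) rewrite by linarith
  assume "(real m - 1) * (real m - real r) = 2 * real g * (real r - 1)"
  then have "poly p 0 = - ((- (real m - 1) / (real r - 1)) ^ (r - 1))"
    using bound(2) rewrite by simp
  then have "(- ((real m - 1) / (real r - 1))) ^ (r - 1) \<in> \<int>"
    using const by (metis Ints_minus minus_divide_left minus_minus)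
  then have "(of_int (1 - int m) / of_int (int r - 1) :: real) ^ (r - 1) \<in> \<int>"
    by (simp add: minus_divide_left)
  then have "(int r - 1) dvd - (int m - 1)"
    using deg by (intro dvd_if_power_of_quotient_in_Ints[where k = "r - 1"]) (auto simp: r_def)
  then show "(int r - 1) dvd (int m - 1)"
    by (simp only: dvd_minus_iff)
qed

lemma rtrancl_adj_sym: "(x, y) \<in> (adj A ends)\<^sup>* \<Longrightarrow> (y, x) \<in> (adj A ends)\<^sup>*"
proof -
  have "sym (adj A ends)" unfolding adj_def sym_def by blast
  then show "(x, y) \<in> (adj A ends)\<^sup>* \<Longrightarrow> (y, x) \<in> (adj A ends)\<^sup>*"
    using sym_rtrancl unfolding sym_def by blast
qed

lemma adj_insert: "adj (insert e A) ends = adj A ends \<union> ends e \<times> ends e"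
  unfolding adj_def by auto

lemma rtrancl_adj_mono: "A \<subseteq> B \<Longrightarrow> (adj A ends)\<^sup>* \<subseteq> (adj B ends)\<^sup>*"
  unfolding adj_def by (rule rtrancl_mono) blast

lemma equiv_comp_rel: "equiv V (comp_rel V A ends)"
  unfolding equiv_def refl_on_def sym_def trans_def comp_rel_def
  using rtrancl_adj_sym by (auto intro: rtrancl_trans)

lemma comp_rel_Image:
  "comp_rel V A ends `` {a} = (if a \<in> V then {b\<in>V. (a, b) \<in> (adj A ends)\<^sup>*} else {})"
  unfolding comp_rel_def by auto

lemma quotient_eq_image: "V // R = (\<lambda>a. R``{a}) ` V"
  unfolding quotient_def by auto

lemma finite_components: "finite V \<Longrightarrow> finite (V // comp_rel V A ends)"
  by (simp add: quotient_eq_image)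

lemma ncomp_no_edges: "finite V \<Longrightarrow> ncomp V {} ends = card V"
proof -
  assume "finite V"
  have "adj {} ends = {}" unfolding adj_def by auto
  then have "V // comp_rel V {} ends = (\<lambda>a. {a}) ` V"
    unfolding quotient_eq_image comp_rel_Image by auto
  then show ?thesis
    unfolding ncomp_def by (simp add: card_image)
qed

lemma ncomp_ge_1: "finite V \<Longrightarrow> V \<noteq> {} \<Longrightarrow> ncomp V A ends \<ge> 1"
  unfolding ncomp_def using finite_components by (metis card_0_eq less_one not_less quotient_is_empty)

lemma ncomp_ge_2:
  assumes "finite V" and "a \<in> V" and "b \<in> V" and "(a, b) \<notin> (adj A ends)\<^sup>*"
  shows "ncomp V A ends \<ge> 2"
proof -
  let ?R = "comp_rel V A ends"
  have "?R``{a} \<noteq> ?R``{b}"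
    using assms(2-4) eq_equiv_class_iff[OF equiv_comp_rel] unfolding comp_rel_def by blast
  moreover have "{?R``{a}, ?R``{b}} \<subseteq> V // ?R"
    using assms(2,3) by (auto intro: quotientI)
  ultimately have "card {?R``{a}, ?R``{b}} \<le> card (V // ?R)"
    using finite_components[OF assms(1)] by (intro card_mono) auto
  with \<open>?R``{a} \<noteq> ?R``{b}\<close> show ?thesis
    unfolding ncomp_def by simp
qed

lemma ncomp_connected: "connected_graph V E ends \<Longrightarrow> ncomp V E ends = 1"
proof -
  assume "connected_graph V E ends"
  then have "V // comp_rel V E ends = {V}"
    unfolding quotient_eq_image connected_graph_def comp_rel_Image by auto
  then show ?thesis unfolding ncomp_def by simp
qed

lemma comp_rel_insert_connected:
  assumes "ends e = {x, y}" and "(x, y) \<in> (adj A ends)\<^sup>*"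
  shows "comp_rel V (insert e A) ends = comp_rel V A ends"
proof -
  have "(adj A ends \<union> ends e \<times> ends e)\<^sup>* = (adj A ends)\<^sup>*"
    using assms rtrancl_adj_sym by (intro rtrancl_subset) auto
  then show ?thesis unfolding comp_rel_def adj_insert by simp
qed

lemma rtrancl_adj_insert_iff:
  fixes A :: "'e set"
  assumes "ends e = {x, y}"
  defines "S \<equiv> (adj A ends)\<^sup>*"
  shows "(a, b) \<in> (adj (insert e A) ends)\<^sup>* \<longleftrightarrow>
    (a, b) \<in> S \<or> ((a, x) \<in> S \<or> (a, y) \<in> S) \<and> ((x, b) \<in> S \<or> (y, b) \<in> S)"
proof
  assume "(a, b) \<in> (adj (insert e A) ends)\<^sup>*"
  then show "(a, b) \<in> S \<or> ((a, x) \<in> S \<or> (a, y) \<in> S) \<and> ((x, b) \<in> S \<or> (y, b) \<in> S)"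
  proof (induction rule: rtrancl_induct)
    case (step b c)
    then have "(b, c) \<in> adj A ends \<or> b \<in> {x, y} \<and> c \<in> {x, y}"
      unfolding adj_insert assms by blast
    then show ?case
    proof
      assume "(b, c) \<in> adj A ends"
      then have "(b, c) \<in> S" unfolding S_def by blast
      with step.IH show ?case unfolding S_def by (meson rtrancl_trans)
    next
      assume "b \<in> {x, y} \<and> c \<in> {x, y}"
      with step.IH show ?case unfolding S_def by blast
    qed
  qed (simp add: S_def)
next
  have "S \<subseteq> (adj (insert e A) ends)\<^sup>*"
    unfolding S_def by (rule rtrancl_adj_mono) blast
  moreover have "(x, y) \<in> (adj (insert e A) ends)\<^sup>*" and "(y, x) \<in> (adj (insert e A) ends)\<^sup>*"
    unfolding adj_insert assms by blast+
  ultimately show "(a, b) \<in> S \<or> ((a, x) \<in> S \<or> (a, y) \<in> S) \<and> ((x, b) \<in> S \<or> (y, b) \<in> S)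
      \<Longrightarrow> (a, b) \<in> (adj (insert e A) ends)\<^sup>*"
    by (meson rtrancl_trans subsetD)
qed

lemma comp_rel_insert_Image_merged:
  assumes e: "ends e = {x, y}" and "x \<in> V" and "y \<in> V" and "a \<in> V"
    and xa: "(x, a) \<in> (adj A ends)\<^sup>* \<or> (y, a) \<in> (adj A ends)\<^sup>*"
  shows "comp_rel V (insert e A) ends `` {a} = comp_rel V A ends `` {x} \<union> comp_rel V A ends `` {y}"
proof -
  let ?S = "(adj A ends)\<^sup>*"
  have ax: "(a, x) \<in> ?S \<or> (a, y) \<in> ?S"
    using xa rtrancl_adj_sym[of x a A ends] rtrancl_adj_sym[of y a A ends] by blast
  have "(a, b) \<in> (adj (insert e A) ends)\<^sup>* \<longleftrightarrow> (x, b) \<in> ?S \<or> (y, b) \<in> ?S" for b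
  proof -
    have "(a, b) \<in> ?S \<Longrightarrow> (x, b) \<in> ?S \<or> (y, b) \<in> ?S"
      using xa by (meson rtrancl_trans)
    then show ?thesis
      using rtrancl_adj_insert_iff[where ends = ends and e = e and A = A, OF e, of a b] ax by argo
  qed
  then show ?thesis
    using assms(2-4) unfolding comp_rel_Image by (auto simp: conj_disj_distribL)
qed

lemma comp_rel_insert_Image_unchanged:
  assumes e: "ends e = {x, y}"
    and "(x, a) \<notin> (adj A ends)\<^sup>*" and "(y, a) \<notin> (adj A ends)\<^sup>*"
  shows "comp_rel V (insert e A) ends `` {a} = comp_rel V A ends `` {a}"
proof -
  have "(a, x) \<notin> (adj A ends)\<^sup>*" and "(a, y) \<notin> (adj A ends)\<^sup>*"
    using assms(2,3) rtrancl_adj_sym[of a x A ends] rtrancl_adj_sym[of a y A ends] by blast+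
  then show ?thesis
    unfolding comp_rel_Image rtrancl_adj_insert_iff[where ends = ends and e = e and A = A, OF e]
    by auto
qed

lemma components_insert_disconnected:
  fixes A :: "'e set"
  assumes "x \<in> V" and "y \<in> V" and e: "ends e = {x, y}" and "(x, y) \<notin> (adj A ends)\<^sup>*"
  defines "R \<equiv> comp_rel V A ends" and "R' \<equiv> comp_rel V (insert e A) ends"
  defines "X \<equiv> R``{x}" and "Y \<equiv> R``{y}"
  shows "V // R' = insert (X \<union> Y) (V // R - {X, Y})"
proof -
  have X: "X = {b\<in>V. (x, b) \<in> (adj A ends)\<^sup>*}" and Y: "Y = {b\<in>V. (y, b) \<in> (adj A ends)\<^sup>*}"
    using assms(1,2) unfolding X_def Y_def R_def comp_rel_Image by simp_all
  have merged: "R'``{a} = X \<union> Y" if "a \<in> X \<union> Y" for a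
  proof -
    have "a \<in> V" and "(x, a) \<in> (adj A ends)\<^sup>* \<or> (y, a) \<in> (adj A ends)\<^sup>*"
      using that unfolding X Y by auto
    then show ?thesis
      unfolding R'_def X_def Y_def R_def
      by (rule comp_rel_insert_Image_merged[where ends = ends and e = e and A = A, OF e assms(1,2)])
  qed
  have unchanged: "R'``{a} = R``{a}" if "a \<in> V" and "a \<notin> X \<union> Y" for a
  proof -
    have "(x, a) \<notin> (adj A ends)\<^sup>*" and "(y, a) \<notin> (adj A ends)\<^sup>*"
      using that unfolding X Y by auto
    then show ?thesis
      unfolding R'_def R_def
      by (rule comp_rel_insert_Image_unchanged[where ends = ends and e = e and A = A, OF e])
  qed
  have class_X: "R``{a} = X" if "a \<in> X" for a
    using that unfolding X_def R_def by (metis Image_singleton_iff equiv_class_eq[OF equiv_comp_rel])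
  have class_Y: "R``{a} = Y" if "a \<in> Y" for a
    using that unfolding Y_def R_def by (metis Image_singleton_iff equiv_class_eq[OF equiv_comp_rel])
  show ?thesis
  proof (intro equalityI subsetI)
    fix K assume "K \<in> V // R'"
    then obtain a where "a \<in> V" and K: "K = R'``{a}" by (auto elim: quotientE)
    show "K \<in> insert (X \<union> Y) (V // R - {X, Y})"
    proof (cases "a \<in> X \<union> Y")
      case True
      then show ?thesis using K merged by blast
    next
      case False
      moreover have "a \<in> R``{a}" using \<open>a \<in> V\<close> unfolding R_def comp_rel_def by simp
      ultimately have "R``{a} \<noteq> X" and "R``{a} \<noteq> Y" by auto
      moreover have "K = R``{a}" using False K unchanged \<open>a \<in> V\<close> by simp
      ultimately show ?thesis using quotientI[OF \<open>a \<in> V\<close>, of R] by simp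
    qed
  next
    fix K assume "K \<in> insert (X \<union> Y) (V // R - {X, Y})"
    then consider "K = X \<union> Y" | a where "a \<in> V" "K = R``{a}" "K \<noteq> X" "K \<noteq> Y"
      by (auto elim: quotientE)
    then show "K \<in> V // R'"
    proof cases
      case 1
      have "x \<in> X" using assms(1) unfolding X by simp
      with 1 show ?thesis using merged[of x] quotientI[OF assms(1), of R'] by simp
    next
      case 2
      then have "a \<notin> X \<union> Y" using class_X class_Y by auto
      then have "K = R'``{a}" using 2 unchanged by simp
      then show ?thesis using quotientI[OF \<open>a \<in> V\<close>, of R'] by simp
    qed
  qed
qed

lemma ncomp_insert_disconnected:
  assumes "finite V" and "x \<in> V" and "y \<in> V" and "ends e = {x, y}"
    and "(x, y) \<notin> (adj A ends)\<^sup>*"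
  shows "ncomp V (insert e A) ends + 1 = ncomp V A ends"
proof -
  let ?Q = "V // comp_rel V A ends"
  define X Y where "X = comp_rel V A ends `` {x}" and "Y = comp_rel V A ends `` {y}"
  have Q: "X \<in> ?Q" "Y \<in> ?Q"
    using assms(2,3) unfolding X_def Y_def by (auto intro: quotientI)
  have "x \<in> X" "y \<in> Y"
    using assms(2,3) unfolding X_def Y_def comp_rel_def by auto
  have "X \<noteq> Y"
    using assms(2,3,5) eq_equiv_class_iff[OF equiv_comp_rel] unfolding X_def Y_def comp_rel_def
    by auto
  have "X \<union> Y \<notin> ?Q"
  proof
    assume "X \<union> Y \<in> ?Q"
    then have "X \<union> Y = X" and "X \<union> Y = Y"
      using quotient_disj[OF equiv_comp_rel] Q \<open>x \<in> X\<close> \<open>y \<in> Y\<close> by blast+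
    with \<open>X \<noteq> Y\<close> show False by simp
  qed
  have "finite ?Q" by (rule finite_components[OF assms(1)])
  then have "card (?Q - {X, Y}) + 2 = card ?Q"
    using Q \<open>X \<noteq> Y\<close> card_mono[of ?Q "{X, Y}"] by (simp add: card_Diff_subset)
  then show ?thesis
    using components_insert_disconnected[OF assms(2-5)] \<open>X \<union> Y \<notin> ?Q\<close> \<open>finite ?Q\<close>
    unfolding ncomp_def X_def Y_def by simp
qed

lemma card_1_or_2_doubleton: "card X \<in> {1, 2} \<Longrightarrow> \<exists>x y. X = {x, y}"
  by (auto simp: card_1_singleton_iff card_2_iff)

lemma ncomp_le_ncomp_insert:
  assumes "finite V" and "ends e \<subseteq> V" and "card (ends e) \<in> {1, 2}"
  shows "ncomp V A ends \<le> ncomp V (insert e A) ends + 1"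
proof -
  obtain x y where e: "ends e = {x, y}" using card_1_or_2_doubleton[OF assms(3)] by blast
  show ?thesis
  proof (cases "(x, y) \<in> (adj A ends)\<^sup>*")
    case True
    then show ?thesis
      unfolding ncomp_def using comp_rel_insert_connected[where ends = ends and e = e, OF e] by simp
  next
    case False
    then show ?thesis
      using ncomp_insert_disconnected[where ends = ends and e = e, OF assms(1) _ _ e] assms(2) e
      by simp
  qed
qed

lemma graph_subset: "graph V E ends \<Longrightarrow> A \<subseteq> E \<Longrightarrow> graph V A ends"
  unfolding graph_def by (auto intro: finite_subset)

lemma card_le_card_edges_plus_ncomp:
  assumes "graph V A ends"
  shows "card V \<le> card A + ncomp V A ends"
proof -
  have "finite V" and "finite A" and "\<forall>e\<in>A. ends e \<subseteq> V \<and> card (ends e) \<in> {1, 2}"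
    using assms unfolding graph_def by auto
  from this(2,3) show ?thesis
  proof (induction A rule: finite_induct)
    case empty
    then show ?case using ncomp_no_edges[OF \<open>finite V\<close>, of ends] by simp
  next
    case (insert e A)
    then show ?case
      using ncomp_le_ncomp_insert[OF \<open>finite V\<close>, where ends = ends and e = e and A = A] by simp
  qed
qed

lemma rtrancl_adj_Un_confined:
  assumes "\<forall>g\<in>A. ends g \<subseteq> W" and "\<forall>g\<in>B. ends g \<inter> W = {}"
    and "(a, b) \<in> (adj (A \<union> B) ends)\<^sup>*" and "a \<in> W"
  shows "b \<in> W \<and> (a, b) \<in> (adj A ends)\<^sup>*"
  using assms(3)
proof (induction rule: rtrancl_induct)
  case (step b c)
  then obtain g where g: "g \<in> A \<union> B" "b \<in> ends g" "c \<in> ends g"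
    unfolding adj_def by blast
  with step.IH assms(2) have "g \<in> A" by blast
  with g assms(1) have "c \<in> W" and "(b, c) \<in> adj A ends"
    unfolding adj_def by blast+
  with step.IH show ?case by (meson rtrancl.rtrancl_into_rtrancl)
qed (use assms(4) in simp)

lemma comp_rel_Image_Un_confined:
  assumes "\<forall>g\<in>A. ends g \<subseteq> W" and "\<forall>g\<in>B. ends g \<inter> W = {}" and "a \<in> W" and "W \<subseteq> U"
  shows "comp_rel U (A \<union> B) ends `` {a} = comp_rel W A ends `` {a}"
proof -
  have "(adj A ends)\<^sup>* \<subseteq> (adj (A \<union> B) ends)\<^sup>*"
    by (rule rtrancl_adj_mono) blast
  then show ?thesis
    unfolding comp_rel_Image using rtrancl_adj_Un_confined[OF assms(1-2) _ assms(3)] assms(3-4)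
    by auto
qed

lemma ncomp_disjoint_Un:
  assumes "finite V1" and "finite V2" and "V1 \<inter> V2 = {}"
    and "\<forall>g\<in>A1. ends g \<subseteq> V1" and "\<forall>g\<in>A2. ends g \<subseteq> V2"
  shows "ncomp (V1 \<union> V2) (A1 \<union> A2) ends = ncomp V1 A1 ends + ncomp V2 A2 ends"
proof -
  let ?R = "comp_rel (V1 \<union> V2) (A1 \<union> A2) ends"
  let ?Q1 = "V1 // comp_rel V1 A1 ends" and ?Q2 = "V2 // comp_rel V2 A2 ends"
  have "\<forall>g\<in>A2. ends g \<inter> V1 = {}" and "\<forall>g\<in>A1. ends g \<inter> V2 = {}"
    using assms(3-5) by blast+
  then have "(\<lambda>a. ?R``{a}) ` V1 = ?Q1" and "(\<lambda>a. ?R``{a}) ` V2 = ?Q2"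
    using comp_rel_Image_Un_confined[OF assms(4), of A2 _ "V1 \<union> V2"]
      comp_rel_Image_Un_confined[OF assms(5), of A1 _ "V1 \<union> V2"]
    unfolding quotient_eq_image by (auto simp: Un_commute intro!: image_cong)
  then have "(V1 \<union> V2) // ?R = ?Q1 \<union> ?Q2"
    unfolding quotient_eq_image image_Un by simp
  moreover have "?Q1 \<inter> ?Q2 = {}"
  proof -
    have "K \<subseteq> V1 \<and> K \<noteq> {}" if "K \<in> ?Q1" for K
      using that unfolding quotient_eq_image comp_rel_Image by auto
    moreover have "K \<subseteq> V2" if "K \<in> ?Q2" for K
      using that unfolding quotient_eq_image comp_rel_Image by auto
    ultimately show ?thesis using assms(3) by blast
  qed
  ultimately show ?thesis
    unfolding ncomp_def using assms(1,2) by (simp add: card_Un_disjoint finite_components)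
qed

lemma card_quotient_map:
  assumes "equiv V R" and "equiv W R'" and "f ` V = W"
    and rel: "\<And>a b. a \<in> V \<Longrightarrow> b \<in> V \<Longrightarrow> (a, b) \<in> R \<longleftrightarrow> (f a, f b) \<in> R'"
  shows "card (V // R) = card (W // R')"
proof -
  have class_image: "f ` (R``{a}) = R'``{f a}" if "a \<in> V" for a
  proof
    show "f ` (R``{a}) \<subseteq> R'``{f a}"
      using rel[OF that] equiv_type[OF assms(1)] by blast
    show "R'``{f a} \<subseteq> f ` (R``{a})"
    proof
      fix c assume c: "c \<in> R'``{f a}"
      then have "c \<in> W" using equiv_type[OF assms(2)] by blast
      then obtain b where "b \<in> V" "c = f b" using assms(3) by blast
      with rel[OF that] c show "c \<in> f ` (R``{a})" by blast
    qed
  qed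
  have "inj_on (\<lambda>X. f ` X) (V // R)"
  proof (rule inj_onI)
    fix X Y assume "X \<in> V // R" "Y \<in> V // R" and eq: "f ` X = f ` Y"
    then obtain a b where ab: "a \<in> V" "X = R``{a}" "b \<in> V" "Y = R``{b}"
      by (auto elim!: quotientE)
    then have "R'``{f a} = R'``{f b}" using eq class_image by simp
    then have "(f a, f b) \<in> R'"
      using eq_equiv_class_iff[OF assms(2)] ab assms(3) by blast
    then show "X = Y" using rel ab equiv_class_eq[OF assms(1)] by simp
  qed
  moreover have "(\<lambda>X. f ` X) ` (V // R) = W // R'"
    unfolding quotient_eq_image assms(3)[symmetric] image_image using class_image by simp
  ultimately show ?thesis using card_image by fastforce
qed

lemma rtrancl_adj_contract_iff:
  assumes "e \<in> A" and e: "ends e = {u, v}"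
  defines "f \<equiv> \<lambda>x. if x = v then u else x"
  shows "(a, b) \<in> (adj A ends)\<^sup>* \<longleftrightarrow> (f a, f b) \<in> (adj (A - {e}) (contract_ends ends u v))\<^sup>*"
proof -
  let ?S = "(adj A ends)\<^sup>*" and ?S' = "(adj (A - {e}) (contract_ends ends u v))\<^sup>*"
  have ends': "contract_ends ends u v g = f ` ends g" for g
    unfolding contract_ends_def f_def by simp
  have "(u, v) \<in> ?S" "(v, u) \<in> ?S"
    using assms(1) e unfolding adj_def by blast+
  then have same_image: "f a = f b \<Longrightarrow> (a, b) \<in> ?S" for a b
    unfolding f_def by (auto split: if_splits)
  have "(f a, f b) \<in> ?S'" if "(a, b) \<in> ?S"
    using that
  proof (induction rule: rtrancl_induct)
    case (step b c)
    then obtain g where g: "g \<in> A" "b \<in> ends g" "c \<in> ends g" unfolding adj_def by blast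
    show ?case
    proof (cases "g = e")
      case True
      then have "f b = f c" using g e unfolding f_def by auto
      then show ?thesis using step.IH by simp
    next
      case False
      then have "(f b, f c) \<in> adj (A - {e}) (contract_ends ends u v)"
        using g unfolding adj_def ends' by blast
      then show ?thesis using step.IH by (meson rtrancl.rtrancl_into_rtrancl)
    qed
  qed simp
  moreover have "\<forall>b. f b = b' \<longrightarrow> (a, b) \<in> ?S" if "(a', b') \<in> ?S'" "f a = a'" for a' b'
    using that
  proof (induction rule: rtrancl_induct)
    case (step y' z')
    then obtain g y z where "g \<in> A" "y \<in> ends g" "z \<in> ends g" "y' = f y" "z' = f z"
      unfolding adj_def ends' by blast
    then have "(a, y) \<in> ?S" and "(y, z) \<in> adj A ends"
      using step.IH step.prems unfolding adj_def by blast+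
    show ?case
    proof (intro allI impI)
      fix b assume "f b = z'"
      then have "(z, b) \<in> ?S" using same_image \<open>z' = f z\<close> by metis
      with \<open>(a, y) \<in> ?S\<close> \<open>(y, z) \<in> adj A ends\<close> show "(a, b) \<in> ?S"
        by (meson rtrancl_trans r_into_rtrancl)
    qed
  qed (use same_image in metis)
  ultimately show ?thesis by blast
qed

lemma ncomp_contract:
  assumes "e \<in> A" and e: "ends e = {u, v}" and "u \<noteq> v" and "u \<in> V" and "v \<in> V"
  shows "ncomp (V - {v}) (A - {e}) (contract_ends ends u v) = ncomp V A ends"
proof -
  define f where "f = (\<lambda>x. if x = v then u else x)"
  have "f ` V = V - {v}" using assms(3-5) unfolding f_def by auto
  moreover have "(a, b) \<in> comp_rel V A ends
      \<longleftrightarrow> (f a, f b) \<in> comp_rel (V - {v}) (A - {e}) (contract_ends ends u v)"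
    if "a \<in> V" and "b \<in> V" for a b
  proof -
    have "f a \<in> V - {v}" and "f b \<in> V - {v}" using that \<open>f ` V = V - {v}\<close> by auto
    then show ?thesis
      using that rtrancl_adj_contract_iff[where ends = ends and e = e and A = A, OF assms(1) e, of a b] unfolding comp_rel_def f_def by auto
  qed
  ultimately show ?thesis
    unfolding ncomp_def
    by (intro card_quotient_map[OF equiv_comp_rel equiv_comp_rel, symmetric]) auto
qed

lemma bridge_ends_disconnected:
  assumes "graph V E ends" and "is_bridge V E ends e"
  obtains x y where "ends e = {x, y}" and "x \<in> V" and "y \<in> V"
    and "(x, y) \<notin> (adj (E - {e}) ends)\<^sup>*"
proof -
  have "e \<in> E" and more_comps: "ncomp V (E - {e}) ends > ncomp V E ends"
    using assms(2) unfolding is_bridge_def is_edge_cut_def by auto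
  then have "ends e \<subseteq> V" and "card (ends e) \<in> {1, 2}"
    using assms(1) unfolding graph_def by auto
  then obtain x y where e: "ends e = {x, y}" using card_1_or_2_doubleton by blast
  have "(x, y) \<notin> (adj (E - {e}) ends)\<^sup>*"
  proof
    assume "(x, y) \<in> (adj (E - {e}) ends)\<^sup>*"
    then have "comp_rel V (insert e (E - {e})) ends = comp_rel V (E - {e}) ends"
      by (rule comp_rel_insert_connected[where ends = ends and e = e, OF e])
    with \<open>e \<in> E\<close> more_comps show False
      unfolding ncomp_def by (simp add: insert_absorb)
  qed
  with e \<open>ends e \<subseteq> V\<close> that show thesis by blast
qed

definition nullity :: "'v set \<Rightarrow> 'e set \<Rightarrow> ('e \<Rightarrow> 'v set) \<Rightarrow> nat" where
  "nullity V A ends = card A + ncomp V A ends - card V"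

definition flow_expansion :: "'v set \<Rightarrow> 'e set \<Rightarrow> ('e \<Rightarrow> 'v set) \<Rightarrow> real poly" where
  "flow_expansion V E ends = (\<Sum>S\<in>Pow E. monom ((-1) ^ card S) (nullity V (E - S) ends))"

lemma sum_Pow_remove:
  assumes "finite E" and "e \<in> E"
  shows "(\<Sum>S\<in>Pow E. h S) = (\<Sum>S\<in>Pow (E - {e}). h S + h (insert e S))"
proof -
  have "Pow E = Pow (E - {e}) \<union> insert e ` Pow (E - {e})"
    using Pow_insert[of e "E - {e}"] assms(2) by (simp add: insert_absorb)
  moreover have "Pow (E - {e}) \<inter> insert e ` Pow (E - {e}) = {}" by blast
  moreover have "inj_on (insert e) (Pow (E - {e}))" by (rule inj_onI) blast
  ultimately show ?thesis
    using assms(1) by (simp add: sum.union_disjoint sum.reindex sum.distrib)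
qed

lemma flow_expansion_remove:
  assumes "finite E" and "e \<in> E"
  shows "flow_expansion V E ends = (\<Sum>S\<in>Pow (E - {e}).
    monom ((-1) ^ card S) (nullity V (insert e (E - {e} - S)) ends)
    - monom ((-1) ^ card S) (nullity V (E - {e} - S) ends))"
  unfolding flow_expansion_def sum_Pow_remove[OF assms]
proof (rule sum.cong[OF refl])
  fix S assume S: "S \<in> Pow (E - {e})"
  then have "finite S" using assms(1) finite_subset by auto
  with S have "E - S = insert e (E - {e} - S)" and "E - insert e S = E - {e} - S"
    and "card (insert e S) = Suc (card S)"
    using assms by (auto simp: card_insert_if)
  then show "monom ((-1::real) ^ card S) (nullity V (E - S) ends)
      + monom ((-1) ^ card (insert e S)) (nullity V (E - insert e S) ends)
    = monom ((-1) ^ card S) (nullity V (insert e (E - {e} - S)) ends)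
      - monom ((-1) ^ card S) (nullity V (E - {e} - S) ends)"
    by (simp add: minus_monom)
qed

lemma nullity_insert_loop:
  assumes "graph V (insert e B) ends" and "e \<notin> B" and "is_loop ends e"
  shows "nullity V (insert e B) ends = Suc (nullity V B ends)"
proof -
  obtain x where "ends e = {x, x}"
    using assms(3) unfolding is_loop_def by (auto simp: card_1_singleton_iff)
  then have "ncomp V (insert e B) ends = ncomp V B ends"
    unfolding ncomp_def using comp_rel_insert_connected[where ends = ends and e = e] by simp
  moreover have "graph V B ends" using assms(1) by (rule graph_subset) blast
  ultimately show ?thesis
    using card_le_card_edges_plus_ncomp[of V B ends] assms(1,2) unfolding nullity_def graph_def
    by simp
qed

lemma nullity_insert_disconnected:
  assumes "graph V (insert e B) ends" and "e \<notin> B"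
    and e: "ends e = {x, y}" and "(x, y) \<notin> (adj B ends)\<^sup>*"
  shows "nullity V (insert e B) ends = nullity V B ends"
proof -
  have "finite V" and "finite B" and "x \<in> V" and "y \<in> V"
    using assms(1) e unfolding graph_def by auto
  then have "ncomp V (insert e B) ends + 1 = ncomp V B ends"
    using ncomp_insert_disconnected[where ends = ends and e = e, OF _ _ _ e assms(4)] by blast
  with \<open>finite B\<close> assms(2) show ?thesis
    unfolding nullity_def by simp
qed

lemma nullity_insert_contract:
  assumes "graph V (insert e B) ends" and "e \<notin> B" and e: "ends e = {u, v}" and "u \<noteq> v"
  shows "nullity V (insert e B) ends = nullity (V - {v}) B (contract_ends ends u v)"
proof -
  have "finite V" and "finite B" and "u \<in> V" and "v \<in> V"
    using assms(1) e unfolding graph_def by auto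
  have "ncomp (V - {v}) B (contract_ends ends u v) = ncomp V (insert e B) ends"
    using ncomp_contract[where ends = ends and e = e and A = "insert e B", OF _ e assms(4)]
      \<open>u \<in> V\<close> \<open>v \<in> V\<close> assms(2) by simp
  moreover have "card V \<ge> 1"
    using \<open>finite V\<close> \<open>v \<in> V\<close> by (metis One_nat_def Suc_leI card_gt_0_iff empty_iff)
  ultimately show ?thesis
    using \<open>finite V\<close> \<open>finite B\<close> \<open>v \<in> V\<close> assms(2) unfolding nullity_def by simp
qed

lemma nullity_disjoint_Un:
  assumes "graph V1 A1 ends" and "graph V2 A2 ends" and "V1 \<inter> V2 = {}" and "A1 \<inter> A2 = {}"
  shows "nullity (V1 \<union> V2) (A1 \<union> A2) ends = nullity V1 A1 ends + nullity V2 A2 ends"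
proof -
  have "ncomp (V1 \<union> V2) (A1 \<union> A2) ends = ncomp V1 A1 ends + ncomp V2 A2 ends"
    using assms(1-3) unfolding graph_def by (intro ncomp_disjoint_Un) auto
  moreover have "card (V1 \<union> V2) = card V1 + card V2" and "card (A1 \<union> A2) = card A1 + card A2"
    using assms unfolding graph_def by (simp_all add: card_Un_disjoint)
  ultimately show ?thesis
    using card_le_card_edges_plus_ncomp[OF assms(1)] card_le_card_edges_plus_ncomp[OF assms(2)]
    unfolding nullity_def by simp
qed

lemma flow_expansion_no_edges: "finite V \<Longrightarrow> flow_expansion V {} ends = 1"
  unfolding flow_expansion_def nullity_def by (simp add: ncomp_no_edges)

lemma flow_expansion_bridge:
  assumes "graph V E ends" and "is_bridge V E ends e"
  shows "flow_expansion V E ends = 0"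
proof -
  obtain x y where e: "ends e = {x, y}" and disconnected: "(x, y) \<notin> (adj (E - {e}) ends)\<^sup>*"
    using bridge_ends_disconnected[OF assms] by blast
  have "e \<in> E" and "finite E" using assms unfolding is_bridge_def graph_def by auto
  have "nullity V (insert e (E - {e} - S)) ends = nullity V (E - {e} - S) ends" for S
  proof (rule nullity_insert_disconnected[where ends = ends and e = e, OF _ _ e])
    show "graph V (insert e (E - {e} - S)) ends"
      using assms(1) by (rule graph_subset) (use \<open>e \<in> E\<close> in blast)
    show "(x, y) \<notin> (adj (E - {e} - S) ends)\<^sup>*"
      using disconnected rtrancl_adj_mono[of "E - {e} - S" "E - {e}" ends] by blast
  qed simp
  then show ?thesis
    unfolding flow_expansion_remove[OF \<open>finite E\<close> \<open>e \<in> E\<close>] by simp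
qed

lemma flow_expansion_loop:
  assumes "graph V E ends" and "e \<in> E" and "is_loop ends e"
  shows "flow_expansion V E ends = [:-1, 1:] * flow_expansion V (E - {e}) ends"
proof -
  have "finite E" using assms(1) unfolding graph_def by simp
  have "graph V (insert e (E - {e} - S)) ends" for S
    using assms(1) by (rule graph_subset) (use assms(2) in blast)
  then have "nullity V (insert e (E - {e} - S)) ends = Suc (nullity V (E - {e} - S) ends)" for S
    using nullity_insert_loop[OF _ _ assms(3)] by blast
  then have "monom c (nullity V (insert e (E - {e} - S)) ends) - monom c (nullity V (E - {e} - S) ends)
      = [:-1, 1:] * monom c (nullity V (E - {e} - S) ends)" for c :: real and S
    by (simp add: monom_Suc algebra_simps)
  then show ?thesis
    unfolding flow_expansion_remove[OF \<open>finite E\<close> assms(2)]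
    unfolding flow_expansion_def sum_distrib_left by (simp only:)
qed

lemma flow_expansion_contract:
  assumes "graph V E ends" and "e \<in> E" and "ends e = {u, v}" and "u \<noteq> v"
  shows "flow_expansion V E ends =
    flow_expansion (V - {v}) (E - {e}) (contract_ends ends u v) - flow_expansion V (E - {e}) ends"
proof -
  have "finite E" using assms(1) unfolding graph_def by simp
  have "graph V (insert e (E - {e} - S)) ends" for S
    using assms(1) by (rule graph_subset) (use assms(2) in blast)
  then have "nullity V (insert e (E - {e} - S)) ends
      = nullity (V - {v}) (E - {e} - S) (contract_ends ends u v)" for S
    using nullity_insert_contract[where ends = ends and e = e, OF _ _ assms(3,4)] by blast
  then show ?thesis
    unfolding flow_expansion_remove[OF \<open>finite E\<close> assms(2)]
    unfolding flow_expansion_def by (simp add: sum_subtractf)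
qed

lemma flow_expansion_disjoint_Un:
  assumes "graph V1 E1 ends" and "graph V2 E2 ends" and "V1 \<inter> V2 = {}" and "E1 \<inter> E2 = {}"
  shows "flow_expansion (V1 \<union> V2) (E1 \<union> E2) ends = flow_expansion V1 E1 ends * flow_expansion V2 E2 ends"
proof -
  have "finite E1" and "finite E2" using assms(1,2) unfolding graph_def by auto
  let ?h = "\<lambda>S. monom ((-1::real) ^ card S) (nullity (V1 \<union> V2) (E1 \<union> E2 - S) ends)"
  let ?h1 = "\<lambda>S. monom ((-1::real) ^ card S) (nullity V1 (E1 - S) ends)"
  let ?h2 = "\<lambda>S. monom ((-1::real) ^ card S) (nullity V2 (E2 - S) ends)"
  have "bij_betw (\<lambda>(S1, S2). S1 \<union> S2) (Pow E1 \<times> Pow E2) (Pow (E1 \<union> E2))"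
  proof (rule bij_betw_byWitness[where f' = "\<lambda>S. (S \<inter> E1, S \<inter> E2)"])
  qed (use assms(4) in auto)
  then have "flow_expansion (V1 \<union> V2) (E1 \<union> E2) ends = (\<Sum>(S1, S2)\<in>Pow E1 \<times> Pow E2. ?h (S1 \<union> S2))"
    unfolding flow_expansion_def by (simp add: sum.reindex_bij_betw[symmetric] case_prod_unfold)
  also have "\<dots> = (\<Sum>S1\<in>Pow E1. \<Sum>S2\<in>Pow E2. ?h (S1 \<union> S2))"
    by (rule sum.cartesian_product[symmetric])
  also have "\<dots> = (\<Sum>S1\<in>Pow E1. \<Sum>S2\<in>Pow E2. ?h1 S1 * ?h2 S2)"
  proof (intro sum.cong refl)
    fix S1 S2 assume "S1 \<in> Pow E1" and "S2 \<in> Pow E2"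
    then have "E1 \<union> E2 - (S1 \<union> S2) = (E1 - S1) \<union> (E2 - S2)"
      and "card (S1 \<union> S2) = card S1 + card S2"
      using assms(4) \<open>finite E1\<close> \<open>finite E2\<close> by (auto intro!: card_Un_disjoint intro: finite_subset)
    moreover have "nullity (V1 \<union> V2) ((E1 - S1) \<union> (E2 - S2)) ends
        = nullity V1 (E1 - S1) ends + nullity V2 (E2 - S2) ends"
      using assms by (intro nullity_disjoint_Un) (auto intro: graph_subset)
    ultimately show "?h (S1 \<union> S2) = ?h1 S1 * ?h2 S2"
      by (simp add: mult_monom power_add)
  qed
  also have "\<dots> = flow_expansion V1 E1 ends * flow_expansion V2 E2 ends"
    unfolding flow_expansion_def by (simp add: sum_product)
  finally show ?thesis .
qed

theorem flow_poly_eq_flow_expansion: "flow_poly V E ends p \<Longrightarrow> p = flow_expansion V E ends"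
proof (induction rule: flow_poly.induct)
  case (empty V ends)
  then show ?case unfolding graph_def by (simp add: flow_expansion_no_edges)
next
  case (bridge V E ends e)
  then show ?case by (simp add: flow_expansion_bridge)
next
  case (disj_union V E ends V1 E1 V2 E2 p1 p2)
  then show ?case by (simp add: flow_expansion_disjoint_Un)
next
  case (loop V E ends e p)
  then show ?case by (simp add: flow_expansion_loop)
next
  case (del_contr V E ends e u v p1 p2)
  then show ?case by (simp add: flow_expansion_contract)
qed

lemma nullity_eq:
  "graph V A ends \<Longrightarrow> int (nullity V A ends) = int (card A) + int (ncomp V A ends) - int (card V)"
  unfolding nullity_def using card_le_card_edges_plus_ncomp[of V A ends] by simp

definition boundary :: "'e set \<Rightarrow> ('e \<Rightarrow> 'v set) \<Rightarrow> 'v set \<Rightarrow> 'e set" where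
  "boundary E ends K = {g\<in>E. ends g \<inter> K \<noteq> {} \<and> \<not> ends g \<subseteq> K}"

lemma ncomp_delete_boundary_ge_2:
  assumes "finite V" and "a \<in> K" and "b \<in> V - K" and "K \<subseteq> V"
  shows "ncomp V (E - boundary E ends K) ends \<ge> 2"
proof (rule ncomp_ge_2[OF assms(1)])
  have "w \<in> K" if "(a, w) \<in> (adj (E - boundary E ends K) ends)\<^sup>*" for w
    using that
  proof (induction rule: rtrancl_induct)
    case (step w z)
    then obtain g where "g \<in> E - boundary E ends K" "w \<in> ends g" "z \<in> ends g"
      unfolding adj_def by blast
    with step.IH show ?case unfolding boundary_def by blast
  qed (use assms(2) in simp)
  then show "(a, b) \<notin> (adj (E - boundary E ends K) ends)\<^sup>*"
    using assms(3) by blast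
qed (use assms in auto)

lemma boundary_component_subset:
  assumes "graph V E ends" and "K \<in> V // comp_rel V (E - S) ends"
  shows "boundary E ends K \<subseteq> S"
proof
  fix g assume g: "g \<in> boundary E ends K"
  then obtain x where "x \<in> ends g" "x \<in> K" and "\<not> ends g \<subseteq> K" "g \<in> E"
    unfolding boundary_def by blast
  from assms(2) obtain a where "a \<in> V" and K: "K = comp_rel V (E - S) ends `` {a}"
    by (auto elim: quotientE)
  show "g \<in> S"
  proof (rule ccontr)
    assume "g \<notin> S"
    have "ends g \<subseteq> K"
    proof
      fix y assume "y \<in> ends g"
      with \<open>x \<in> ends g\<close> \<open>g \<in> E\<close> \<open>g \<notin> S\<close> have "(x, y) \<in> adj (E - S) ends"
        unfolding adj_def by blast
      moreover have "y \<in> V" using assms(1) \<open>g \<in> E\<close> \<open>y \<in> ends g\<close> unfolding graph_def by blast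
      ultimately show "y \<in> K"
        using \<open>x \<in> K\<close> unfolding K comp_rel_def by (auto intro: rtrancl_into_rtrancl)
    qed
    with \<open>\<not> ends g \<subseteq> K\<close> show False ..
  qed
qed

lemma card_boundaries_containing_le_2:
  assumes "graph V E ends" and "g \<in> E" and "pairwise disjnt Q"
  shows "card {K\<in>Q. g \<in> boundary E ends K} \<le> 2"
proof -
  have "finite (ends g)" and "card (ends g) \<le> 2"
    using assms(1,2) unfolding graph_def by (auto intro: finite_subset)
  have "\<forall>K\<in>{K\<in>Q. g \<in> boundary E ends K}. \<exists>x. x \<in> ends g \<inter> K"
    unfolding boundary_def by blast
  then obtain h where h: "\<forall>K\<in>{K\<in>Q. g \<in> boundary E ends K}. h K \<in> ends g \<inter> K"
    by metis
  have "inj_on h {K\<in>Q. g \<in> boundary E ends K}"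
  proof (rule inj_onI)
    fix K1 K2 assume "K1 \<in> {K\<in>Q. g \<in> boundary E ends K}" "K2 \<in> {K\<in>Q. g \<in> boundary E ends K}"
      and "h K1 = h K2"
    with h have "K1 \<in> Q" "K2 \<in> Q" "h K1 \<in> K1 \<inter> K2" by auto
    with assms(3) show "K1 = K2" unfolding pairwise_def disjnt_def by blast
  qed
  then have "card {K\<in>Q. g \<in> boundary E ends K} \<le> card (ends g)"
    using h \<open>finite (ends g)\<close> by (intro card_inj_on_le) auto
  with \<open>card (ends g) \<le> 2\<close> show ?thesis by simp
qed

lemma poly_flow_expansion_1:
  assumes "finite E" and "e \<in> E"
  shows "poly (flow_expansion V E ends) 1 = 0"
  unfolding flow_expansion_remove[OF assms] by (simp add: poly_sum poly_monom)

lemma poly_flow_expansion_0_Ints: "poly (flow_expansion V E ends) 0 \<in> \<int>"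
  unfolding flow_expansion_def poly_sum poly_monom by (intro Ints_sum) auto

lemma k_edge_cuts_eq_empty:
  assumes "finite E" and "card E < k"
  shows "k_edge_cuts k V E ends = {}"
proof -
  have "card S \<noteq> k" if "S \<subseteq> E" for S
    using card_mono[OF assms(1) that] assms(2) by simp
  then show ?thesis unfolding k_edge_cuts_def is_edge_cut_def by blast
qed

locale three_edge_connected =
  fixes V :: "'v set" and E :: "'e set" and ends :: "'e \<Rightarrow> 'v set"
  assumes graph: "graph V E ends"
    and connected: "connected_graph V E ends"
    and bridgeless: "\<forall>e\<in>E. \<not> is_bridge V E ends e"
    and no_2_edge_cuts: "k_edge_cuts 2 V E ends = {}"
begin

lemma finite_V: "finite V" and finite_E: "finite E"
  using graph unfolding graph_def by auto

lemma ncomp_E: "ncomp V E ends = 1"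
  using connected by (rule ncomp_connected)

lemma not_edge_cut_if_card_le_2:
  assumes "S \<subseteq> E" and "card S \<le> 2"
  shows "\<not> is_edge_cut V E ends S"
proof
  assume cut: "is_edge_cut V E ends S"
  have "finite S" using assms(1) finite_E by (rule finite_subset)
  consider "card S = 0" | "card S = 1" | "card S = 2"
    using assms(2) by linarith
  then show False
  proof cases
    case 1
    with \<open>finite S\<close> cut show False unfolding is_edge_cut_def by simp
  next
    case 2
    then obtain e where "S = {e}" by (auto simp: card_1_singleton_iff)
    with cut assms(1) bridgeless show False unfolding is_bridge_def by auto
  next
    case 3
    with cut no_2_edge_cuts show False unfolding k_edge_cuts_def by auto
  qed
qed

lemma ncomp_delete_small:
  assumes "S \<subseteq> E" and "card S \<le> 2"
  shows "ncomp V (E - S) ends = 1"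
proof -
  have "ncomp V (E - S) ends \<le> 1"
    using not_edge_cut_if_card_le_2[OF assms] assms(1) unfolding is_edge_cut_def ncomp_E by simp
  moreover have "V \<noteq> {}" using connected unfolding connected_graph_def by simp
  ultimately show ?thesis using ncomp_ge_1[OF finite_V, of "E - S" ends] by simp
qed

lemma three_le_card_boundary:
  assumes "a \<in> K" and "b \<in> V - K" and "K \<subseteq> V"
  shows "3 \<le> card (boundary E ends K)"
proof -
  have "boundary E ends K \<subseteq> E" unfolding boundary_def by blast
  moreover have "is_edge_cut V E ends (boundary E ends K)"
    using ncomp_delete_boundary_ge_2[OF finite_V assms, of E ends] \<open>boundary E ends K \<subseteq> E\<close>
    unfolding is_edge_cut_def ncomp_E by simp
  ultimately have "\<not> card (boundary E ends K) \<le> 2"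
    using not_edge_cut_if_card_le_2 by blast
  then show ?thesis by simp
qed

lemma three_le_card_boundary_component:
  assumes "K \<in> V // comp_rel V A ends" and "2 \<le> ncomp V A ends"
  shows "3 \<le> card (boundary E ends K)"
proof -
  let ?Q = "V // comp_rel V A ends"
  have "?Q \<noteq> {K}"
  proof
    assume "?Q = {K}"
    with assms(2) show False unfolding ncomp_def by simp
  qed
  then obtain K' where "K' \<in> ?Q" and "K' \<noteq> K" using assms(1) by blast
  then have "K' \<inter> K = {}"
    using quotient_disj[OF equiv_comp_rel \<open>K' \<in> ?Q\<close> assms(1)] by simp
  obtain b where "b \<in> K'"
    using in_quotient_imp_non_empty[OF equiv_comp_rel \<open>K' \<in> ?Q\<close>] by blast
  obtain a where "a \<in> K"
    using in_quotient_imp_non_empty[OF equiv_comp_rel assms(1)] by blast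
  have "K \<subseteq> V" and "K' \<subseteq> V"
    using in_quotient_imp_subset[OF equiv_comp_rel] assms(1) \<open>K' \<in> ?Q\<close> by blast+
  with \<open>a \<in> K\<close> \<open>b \<in> K'\<close> \<open>K' \<inter> K = {}\<close> show ?thesis
    using three_le_card_boundary[of a K b] by blast
qed

lemma three_ncomp_le_two_card:
  assumes "S \<subseteq> E" and "2 \<le> ncomp V (E - S) ends"
  shows "3 * ncomp V (E - S) ends \<le> 2 * card S"
proof -
  let ?Q = "V // comp_rel V (E - S) ends"
  have "finite ?Q" using finite_V by (rule finite_components)
  have "finite S" using assms(1) finite_E by (rule finite_subset)
  have "pairwise disjnt ?Q"
    using quotient_disj[OF equiv_comp_rel] unfolding pairwise_def disjnt_def by blast
  have "3 * card ?Q = (\<Sum>K\<in>?Q. 3)" by simp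
  also have "\<dots> \<le> (\<Sum>K\<in>?Q. card (boundary E ends K))"
    using three_le_card_boundary_component assms(2) by (intro sum_mono) blast
  also have "\<dots> = (\<Sum>K\<in>?Q. \<Sum>g\<in>S. if g \<in> boundary E ends K then 1 else 0)"
    using boundary_component_subset[OF graph] \<open>finite S\<close>
    by (intro sum.cong refl) (simp add: sum.If_cases Int_absorb1)
  also have "\<dots> = (\<Sum>g\<in>S. card {K\<in>?Q. g \<in> boundary E ends K})"
    using \<open>finite ?Q\<close> by (subst sum.swap) (simp add: sum.If_cases Int_def)
  also have "\<dots> \<le> (\<Sum>g\<in>S. 2)"
    using card_boundaries_containing_le_2[OF graph _ \<open>pairwise disjnt ?Q\<close>] assms(1)
    by (intro sum_mono) blast
  finally show ?thesis unfolding ncomp_def by simp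
qed

lemma nullity_delete:
  assumes "S \<subseteq> E"
  shows "nullity V (E - S) ends + card S = nullity V E ends + ncomp V (E - S) ends - 1"
proof -
  have "finite S" using assms finite_E by (rule finite_subset)
  then have "card (E - S) = card E - card S" and "card S \<le> card E"
    using assms finite_E by (simp_all add: card_Diff_subset card_mono)
  moreover have "graph V (E - S) ends" using graph by (rule graph_subset) blast
  ultimately show ?thesis
    using nullity_eq[OF graph] nullity_eq[of V "E - S" ends] ncomp_E by simp
qed

lemma nullity_delete_cases:
  assumes "S \<subseteq> E"
  shows "nullity V (E - S) ends \<le> nullity V E ends"
    and "nullity V (E - S) ends = nullity V E ends \<longleftrightarrow> card S = 0"
    and "nullity V (E - S) ends + 1 = nullity V E ends \<longleftrightarrow> card S = 1"
    and "nullity V (E - S) ends + 2 = nullity V E ends \<longleftrightarrow> card S = 2 \<or> S \<in> k_edge_cuts 3 V E ends"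
proof -
  let ?c = "ncomp V (E - S) ends"
  have "S \<in> k_edge_cuts 3 V E ends \<longleftrightarrow> card S = 3 \<and> 2 \<le> ?c"
    using assms unfolding k_edge_cuts_def is_edge_cut_def ncomp_E by auto
  moreover have "1 \<le> ?c"
    using connected finite_V ncomp_ge_1 unfolding connected_graph_def by blast
  moreover have "card S \<le> 2 \<Longrightarrow> ?c = 1" using ncomp_delete_small[OF assms] by blast
  moreover have "2 \<le> ?c \<Longrightarrow> 3 * ?c \<le> 2 * card S" using three_ncomp_le_two_card[OF assms] by blast
  ultimately show "nullity V (E - S) ends \<le> nullity V E ends"
    and "nullity V (E - S) ends = nullity V E ends \<longleftrightarrow> card S = 0"
    and "nullity V (E - S) ends + 1 = nullity V E ends \<longleftrightarrow> card S = 1"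
    and "nullity V (E - S) ends + 2 = nullity V E ends \<longleftrightarrow> card S = 2 \<or> S \<in> k_edge_cuts 3 V E ends"
    using nullity_delete[OF assms] by arith+
qed

lemma coeff_flow_expansion:
  "coeff (flow_expansion V E ends) k = (\<Sum>S | S \<subseteq> E \<and> nullity V (E - S) ends = k. (-1) ^ card S)"
proof -
  have "coeff (flow_expansion V E ends) k
      = (\<Sum>S\<in>Pow E. if nullity V (E - S) ends = k then (-1) ^ card S else 0)"
    unfolding flow_expansion_def coeff_sum coeff_monom by (intro sum.cong) auto
  also have "\<dots> = (\<Sum>S\<in>{S\<in>Pow E. nullity V (E - S) ends = k}. (-1) ^ card S)"
    by (rule sum.inter_filter[symmetric]) (simp add: finite_E)
  also have "{S\<in>Pow E. nullity V (E - S) ends = k} = {S. S \<subseteq> E \<and> nullity V (E - S) ends = k}"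
    by blast
  finally show ?thesis .
qed

lemma coeff_flow_expansion_above:
  assumes "nullity V E ends < k"
  shows "coeff (flow_expansion V E ends) k = 0"
proof -
  have "{S. S \<subseteq> E \<and> nullity V (E - S) ends = k} = {}"
    using nullity_delete_cases(1) assms by (metis (mono_tags, lifting) empty_Collect_eq leD)
  then show ?thesis unfolding coeff_flow_expansion by (simp only: sum.empty)
qed

lemma coeff_flow_expansion_nullity: "coeff (flow_expansion V E ends) (nullity V E ends) = 1"
proof -
  have "S \<subseteq> E \<Longrightarrow> card S = 0 \<longleftrightarrow> S = {}" for S
    using finite_subset[OF _ finite_E] by auto
  then have "{S. S \<subseteq> E \<and> nullity V (E - S) ends = nullity V E ends} = {{}}"
    using nullity_delete_cases(2) by auto
  then show ?thesis unfolding coeff_flow_expansion by simp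
qed

lemma degree_flow_expansion: "degree (flow_expansion V E ends) = nullity V E ends"
  using coeff_flow_expansion_above coeff_flow_expansion_nullity
  by (intro order.antisym degree_le le_degree) auto

lemma coeff_flow_expansion_nullity_minus_1:
  assumes "1 \<le> nullity V E ends"
  shows "coeff (flow_expansion V E ends) (nullity V E ends - 1) = - real (card E)"
proof -
  have "nullity V (E - S) ends = nullity V E ends - 1 \<longleftrightarrow> card S = 1" if "S \<subseteq> E" for S
    using nullity_delete_cases(3)[OF that] assms by linarith
  then have "{S. S \<subseteq> E \<and> nullity V (E - S) ends = nullity V E ends - 1} = {S. S \<subseteq> E \<and> card S = 1}"
    by blast
  then show ?thesis
    unfolding coeff_flow_expansion by (simp add: n_subsets[OF finite_E])
qed

lemma coeff_flow_expansion_nullity_minus_2: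
  assumes "2 \<le> nullity V E ends"
  shows "coeff (flow_expansion V E ends) (nullity V E ends - 2)
    = real (card E choose 2) - real (card (k_edge_cuts 3 V E ends))"
proof -
  have "nullity V (E - S) ends = nullity V E ends - 2
      \<longleftrightarrow> card S = 2 \<or> S \<in> k_edge_cuts 3 V E ends" if "S \<subseteq> E" for S
    using nullity_delete_cases(4)[OF that] assms by linarith
  moreover have "k_edge_cuts 3 V E ends \<subseteq> Pow E"
    unfolding k_edge_cuts_def is_edge_cut_def by blast
  ultimately have "{S. S \<subseteq> E \<and> nullity V (E - S) ends = nullity V E ends - 2}
      = {S. S \<subseteq> E \<and> card S = 2} \<union> k_edge_cuts 3 V E ends"
    by blast
  moreover have "finite (k_edge_cuts 3 V E ends)"
    using finite_E unfolding k_edge_cuts_def is_edge_cut_def by (auto intro: finite_subset)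
  moreover have "{S. S \<subseteq> E \<and> card S = 2} \<inter> k_edge_cuts 3 V E ends = {}"
    unfolding k_edge_cuts_def by auto
  moreover have "sum (\<lambda>S. (-1::real) ^ card S) (k_edge_cuts 3 V E ends) = - card (k_edge_cuts 3 V E ends)"
    unfolding k_edge_cuts_def by simp
  ultimately show ?thesis
    unfolding coeff_flow_expansion using finite_E
    by (simp add: sum.union_disjoint n_subsets)
qed

lemma int_nullity: "int (nullity V E ends) = int (card E) - int (card V) + 1"
  using nullity_eq[OF graph] ncomp_E by simp

lemma two_le_nullity:
  assumes "2 \<le> card E"
  shows "2 \<le> nullity V E ends"
proof -
  obtain S where "S \<subseteq> E" and "card S = 2"
    using obtain_subset_with_card_n[OF assms] by blast
  then show ?thesis using nullity_delete_cases(4)[of S] by linarith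
qed

lemma nullity_eq_card_if_le_1:
  assumes "card E \<le> 1"
  shows "nullity V E ends = card E"
proof -
  have "nullity V {} ends = 0"
    unfolding nullity_def using ncomp_no_edges[OF finite_V, of ends] by simp
  then show ?thesis
    using nullity_delete[of E] ncomp_delete_small[of E] assms by simp
qed

lemma real_rooted_flow_expansion_bound:
  assumes "\<forall>z::complex. poly (map_poly of_real (flow_expansion V E ends)) z = 0 \<longrightarrow> z \<in> \<real>"
    and "2 \<le> card E"
  defines "m \<equiv> card E" and "\<gamma> \<equiv> card (k_edge_cuts 3 V E ends)" and "r \<equiv> nullity V E ends"
  shows "(real m - 1) * (real m - real r) \<le> 2 * real \<gamma> * (real r - 1)"
    and "(real m - 1) * (real m - real r) = 2 * real \<gamma> * (real r - 1) \<Longrightarrow> (int r - 1) dvd (int m - 1)"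
proof -
  let ?F = "flow_expansion V E ends"
  have "2 \<le> r" unfolding r_def using two_le_nullity assms(2) by simp
  obtain e where "e \<in> E" using assms(2) by fastforce
  have "lead_coeff ?F = 1" and "degree ?F \<ge> 2"
    and "coeff ?F (degree ?F - 1) = - real m"
    and "coeff ?F (degree ?F - 2) = real (m choose 2) - real \<gamma>"
    using \<open>2 \<le> r\<close> coeff_flow_expansion_nullity coeff_flow_expansion_nullity_minus_1
      coeff_flow_expansion_nullity_minus_2
    unfolding degree_flow_expansion m_def \<gamma>_def r_def by simp_all
  from real_rooted_poly_cut_bound[OF this(1,2) poly_flow_expansion_1[OF finite_E \<open>e \<in> E\<close>]
      assms(1) this(3,4) poly_flow_expansion_0_Ints]
  show "(real m - 1) * (real m - real r) \<le> 2 * real \<gamma> * (real r - 1)"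
    and "(real m - 1) * (real m - real r) = 2 * real \<gamma> * (real r - 1) \<Longrightarrow> (int r - 1) dvd (int m - 1)"
    unfolding degree_flow_expansion r_def by simp_all
qed

end

theorem lemma5p2:
  fixes V :: "'v set" and E :: "'e set" and ends :: "'e \<Rightarrow> 'v set" and p :: "real poly"
  assumes "graph V E ends"
    and "connected_graph V E ends"
    and "\<forall>e\<in>E. \<not> is_bridge V E ends e"
    and "k_edge_cuts 2 V E ends = {}"
    and "flow_poly V E ends p"
    and "\<forall>z::complex. poly (map_poly complex_of_real p) z = 0 \<longrightarrow> z \<in> \<real>"
  shows "let \<gamma> = card (k_edge_cuts 3 V E ends);
             r = int (card E) - int (card V) + 1
         in real \<gamma> \<ge> real_of_int ((int (card E) - r) * (int (card E) - 1)) / real_of_int (2 * (r - 1))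
            \<and> (\<not> (r - 1) dvd (int (card E) - 1) \<longrightarrow>
                real \<gamma> > real_of_int ((int (card E) - r) * (int (card E) - 1)) / real_of_int (2 * (r - 1)))"
proof -
  interpret three_edge_connected V E ends
    using assms(1-4) by unfold_locales
  define m \<gamma> r where "m = card E" and "\<gamma> = card (k_edge_cuts 3 V E ends)" and "r = nullity V E ends"
  have r: "int m - int (card V) + 1 = int r"
    unfolding r_def m_def by (rule int_nullity[symmetric])
  show ?thesis
  proof (cases "m \<le> 1")
    case True
    then have "r = m" unfolding m_def r_def by (rule nullity_eq_card_if_le_1)
    have "\<gamma> = 0"
      using k_edge_cuts_eq_empty[OF finite_E, of 3 V ends] True unfolding m_def \<gamma>_def by simp
    with \<open>r = m\<close> show ?thesis
      unfolding Let_def m_def[symmetric] \<gamma>_def[symmetric] r by simp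
  next
    case False
    then have "2 \<le> card E" unfolding m_def by simp
    have "\<forall>z::complex. poly (map_poly of_real (flow_expansion V E ends)) z = 0 \<longrightarrow> z \<in> \<real>"
      using assms(6) flow_poly_eq_flow_expansion[OF assms(5)] by simp
    note bound = real_rooted_flow_expansion_bound[OF this \<open>2 \<le> card E\<close>, folded m_def \<gamma>_def r_def]
    have "2 * (real r - 1) > 0" using \<open>2 \<le> card E\<close> two_le_nullity unfolding r_def by simp
    with bound have "(real m - real r) * (real m - 1) / (2 * (real r - 1)) \<le> real \<gamma>"
      and "\<not> (int r - 1) dvd (int m - 1) \<Longrightarrow> (real m - real r) * (real m - 1) / (2 * (real r - 1)) < real \<gamma>"
      unfolding m_def by (simp_all add: pos_divide_le_eq pos_divide_less_eq mult_ac)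
        (metis less_eq_real_def)
    then show ?thesis
      unfolding Let_def m_def[symmetric] \<gamma>_def[symmetric] r by simp
  qed
qed

end
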